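(* Let $\mathbb{F}$ be a field of characteristic zero, let $\mathcal{A}=M_4(\mathbb{F})$ with the transpose involution, and let $\mathcal{L}$ be a Lie skew-ideal of $\mathcal{A}$. If $\mathcal{L}$ is closed under conjugation by elements of $O(4)=\{P\in M_4(\mathbb{F}): PP^t=I\}$, then $\mathcal{L}$ is one of \[ 0,\ \mathcal{Z},\ \mathcal{K},\ [\mathcal{S},\mathcal{K}],\ \mathcal{S},\ \mathcal{Z}+\mathcal{K},\ [\mathcal{A},\mathcal{A}],\ \mathcal{A}. \]
   Context: A Lie skew-ideal of an algebra with involution $\mathcal{A}$ is a subspace $\mathcal{L}$ such that $[x,a]=xa-ax\in\mathcal{L}$ for all $x\in\mathcal{L}$ and all skew-symmetric $a\in\mathcal{A}$. $\mathcal{S}$, $\mathcal{K}$, $\mathcal{Z}$ denote the symmetric, skew-symmetric (w.r.t. transpose) and scalar matrices in $M_4(\mathbb{F})$; for subsets $U,V$, $[U,V]$ is the linear span of $\{uv-vu:u\in U,v\in V\}$. *)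

theory Defs
  imports "HOL-Analysis.Analysis" "HOL-Library.Numeral_Type"
begin

type_synonym 'a M4 = "'a ^ 4 ^ 4"

definition msmult :: "'a::field \<Rightarrow> 'a M4 \<Rightarrow> 'a M4" where
  "msmult c A = (\<chi> i j. c * A $ i $ j)"

definition msubspace :: "'a::field M4 set \<Rightarrow> bool" where
  "msubspace V \<longleftrightarrow> 0 \<in> V \<and> (\<forall>x\<in>V. \<forall>y\<in>V. x + y \<in> V) \<and> (\<forall>c. \<forall>x\<in>V. msmult c x \<in> V)"

definition mspan :: "'a::field M4 set \<Rightarrow> 'a M4 set" where
  "mspan S = \<Inter>{V. msubspace V \<and> S \<subseteq> V}"

definition comm :: "'a::field M4 \<Rightarrow> 'a M4 \<Rightarrow> 'a M4" where
  "comm x y = x ** y - y ** x"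

definition mbracket :: "'a::field M4 set \<Rightarrow> 'a M4 set \<Rightarrow> 'a M4 set" where
  "mbracket U V = mspan {comm u v | u v. u \<in> U \<and> v \<in> V}"

definition symm :: "'a::field M4 set" where
  "symm = {A. transpose A = A}"

definition skew :: "'a::field M4 set" where
  "skew = {A. transpose A = - A}"

definition scalars :: "'a::field M4 set" where
  "scalars = range mat"

definition msum :: "'a::field M4 set \<Rightarrow> 'a M4 set \<Rightarrow> 'a M4 set" where
  "msum U V = {u + v | u v. u \<in> U \<and> v \<in> V}"

definition lie_skew_ideal :: "'a::field M4 set \<Rightarrow> bool" where
  "lie_skew_ideal L \<longleftrightarrow> msubspace L \<and> (\<forall>x\<in>L. \<forall>a\<in>skew. comm x a \<in> L)"

definition orth4 :: "'a::field M4 set" where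
  "orth4 = {P. P ** transpose P = mat 1}"

end

(*
  Over a field of characteristic zero, M_4 = Z \<oplus> S_0 \<oplus> K with S_0 the traceless symmetric
  matrices. Conjugating by diagonal sign matrices in O(4) shows that L contains, with each x,
  its diagonal part and each pair part x_ij e_ij + x_ji e_ji. Commutators with e_ij - e_ji then
  split a pair part into its symmetric and skew pieces and compare diagonal entries, while
  conjugating by permutation matrices moves any index pair to (1,2). Hence L is the sum of
  those of Z, S_0, K whose generator (I, e_12 + e_21, e_12 - e_21 respectively) lies in L,
  and the eight choices give the eight spaces of the list.
*)
theory Submission
  imports Defs
begin

definition unit_mat :: "4 \<Rightarrow> 4 \<Rightarrow> 'a::field M4" where
  "unit_mat i j = (\<chi> a b. if a = i \<and> b = j then 1 else 0)"

definition sym_unit :: "4 \<Rightarrow> 4 \<Rightarrow> 'a::field M4" where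
  "sym_unit i j = unit_mat i j + unit_mat j i"

definition skew_unit :: "4 \<Rightarrow> 4 \<Rightarrow> 'a::field M4" where
  "skew_unit i j = unit_mat i j - unit_mat j i"

definition diag_part :: "'a::field M4 \<Rightarrow> 'a M4" where
  "diag_part x = (\<chi> a b. if a = b then x $ a $ b else 0)"

lemma unit_mat_nth [simp]: "unit_mat i j $ a $ b = (if a = i \<and> b = j then 1 else 0)"
  by (simp add: unit_mat_def)

lemma msmult_nth [simp]: "msmult c A $ a $ b = c * A $ a $ b"
  by (simp add: msmult_def)

lemma mat_nth: "mat c $ a $ b = (if a = b then c else 0)"
  by (simp add: mat_def)

lemma transpose_nth [simp]: "transpose A $ a $ b = A $ b $ a"
  by (simp add: transpose_def)

lemma transpose_unit_mat: "transpose (unit_mat i j) = (unit_mat j i :: 'a::field M4)"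
  by (simp add: vec_eq_iff conj_commute)

lemma transpose_zero: "transpose (0 :: 'a::field M4) = 0"
  by (simp add: vec_eq_iff)

lemma transpose_add: "transpose (A + B) = transpose A + transpose (B :: 'a::field M4)"
  by (simp add: vec_eq_iff)

lemma transpose_diff: "transpose (A - B) = transpose A - transpose (B :: 'a::field M4)"
  by (simp add: vec_eq_iff)

lemma transpose_msmult: "transpose (msmult c A) = msmult c (transpose A)"
  by (simp add: vec_eq_iff)

lemma trace_msmult: "trace (msmult c A) = c * trace A"
  by (simp add: trace_def sum_distrib_left)

lemma unit_mat_mult_nth [simp]:
  "(unit_mat i j ** X) $ a $ b = (if a = i then X $ j $ b else (0::'a::field))"
  "(X ** unit_mat i j) $ a $ b = (if b = j then X $ a $ i else (0::'a::field))"
proof -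
  have "(if P then 1 else 0) * y = (if P then y else 0)"
    "y * (if P then 1 else 0) = (if P then y else 0)" for P and y :: 'a
    by simp_all
  then show "(unit_mat i j ** X) $ a $ b = (if a = i then X $ j $ b else 0)"
    "(X ** unit_mat i j) $ a $ b = (if b = j then X $ a $ i else 0)"
    by (auto simp: matrix_matrix_mult_def)
qed

lemma matrix_mult_distribs:
  fixes A B C :: "'a::field M4"
  shows "(A + B) ** C = A ** C + B ** C" "(A - B) ** C = A ** C - B ** C"
    "C ** (A + B) = C ** A + C ** B" "C ** (A - B) = C ** A - C ** B"
    "msmult c A ** B = msmult c (A ** B)" "B ** msmult c A = msmult c (B ** A)"
    "(- A) ** B = - (A ** B)" "B ** (- A) = - (B ** A)"
  by (simp_all add: matrix_matrix_mult_def vec_eq_iff sum.distrib sum_subtractf sum_negf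
      sum_distrib_left algebra_simps)

lemma trace_comm: "trace (comm A B) = (0 :: 'a::field)"
  using trace_mul_sym[of A B] by (simp add: comm_def trace_sub)

lemma symm_iff: "A \<in> symm \<longleftrightarrow> (\<forall>a b. A $ a $ b = A $ b $ a)"
  by (auto simp: symm_def vec_eq_iff)

lemma sym_unit_symm: "sym_unit i j \<in> symm"
  by (simp add: symm_def sym_unit_def transpose_add transpose_unit_mat)

lemma unit_mat_diag_symm: "unit_mat i i \<in> symm"
  by (simp add: symm_def transpose_unit_mat)

lemma unit_mat_diff_symm: "unit_mat j j - unit_mat i i \<in> symm"
  by (simp add: symm_def transpose_diff transpose_unit_mat)

lemma mat_symm: "mat c \<in> symm"
  by (simp add: symm_def)

lemma skew_unit_skew: "skew_unit i j \<in> skew"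
  by (simp add: skew_def skew_unit_def transpose_diff transpose_unit_mat)

lemma skew_diag_zero:
  assumes "x \<in> (skew :: 'a::field_char_0 M4 set)"
  shows "x $ a $ a = 0"
proof -
  have "transpose x $ a $ a = - x $ a $ a" using assms by (simp add: skew_def)
  then show ?thesis by simp
qed

lemma comm_symm_skew_symm:
  assumes "u \<in> symm" "v \<in> skew"
  shows "comm u v \<in> (symm :: 'a::field M4 set)"
  using assms
  by (simp add: symm_def skew_def comm_def transpose_diff matrix_transpose_mul matrix_mult_distribs)

lemma comm_pair_skew_unit:
  assumes "i \<noteq> j"
  shows "comm (msmult a (unit_mat i j) + msmult b (unit_mat j i)) (skew_unit i j)
    = msmult (a + b) (unit_mat j j - unit_mat i i)"
  using assms by (auto simp: vec_eq_iff comm_def skew_unit_def matrix_mult_distribs algebra_simps)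

lemma comm_sym_unit_skew_unit:
  assumes "i \<noteq> j"
  shows "comm (sym_unit i j) (skew_unit i j) = msmult (2::'a::field) (unit_mat j j - unit_mat i i)"
  using assms by (auto simp: vec_eq_iff comm_def skew_unit_def sym_unit_def matrix_mult_distribs)

lemma comm_unit_diff_skew_unit:
  assumes "i \<noteq> j"
  shows "comm (unit_mat j j - unit_mat i i) (skew_unit i j) = msmult (-2::'a::field) (sym_unit i j)"
  using assms by (auto simp: vec_eq_iff comm_def skew_unit_def sym_unit_def matrix_mult_distribs)

lemma comm_unit_sym_unit:
  assumes "i \<noteq> j"
  shows "comm (unit_mat i i) (sym_unit i j) = (skew_unit i j :: 'a::field M4)"
  using assms by (auto simp: vec_eq_iff comm_def skew_unit_def sym_unit_def matrix_mult_distribs)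

lemma comm_unit_skew_unit:
  assumes "i \<noteq> j"
  shows "comm (unit_mat i i) (skew_unit i j) = (sym_unit i j :: 'a::field M4)"
  using assms by (auto simp: vec_eq_iff comm_def skew_unit_def sym_unit_def matrix_mult_distribs)

lemma comm_diag_part_skew_unit:
  assumes "i \<noteq> j"
  shows "comm (diag_part x) (skew_unit i j)
    = msmult (x $ i $ i - x $ j $ j) (sym_unit i j :: 'a::field M4)"
  using assms by (auto simp: vec_eq_iff comm_def skew_unit_def sym_unit_def diag_part_def
      matrix_mult_distribs algebra_simps)

lemma msubspace_0: "msubspace V \<Longrightarrow> 0 \<in> V"
  by (simp add: msubspace_def)

lemma msubspace_add: "msubspace V \<Longrightarrow> x \<in> V \<Longrightarrow> y \<in> V \<Longrightarrow> x + y \<in> V"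
  by (simp add: msubspace_def)

lemma msubspace_msmult: "msubspace V \<Longrightarrow> x \<in> V \<Longrightarrow> msmult c x \<in> V"
  by (simp add: msubspace_def)

lemma msubspace_diff:
  assumes "msubspace V" "x \<in> V" "y \<in> V"
  shows "x - y \<in> V"
proof -
  have "msmult (-1) y = - y" by (simp add: vec_eq_iff)
  then show ?thesis
    using assms msubspace_add[of V x "msmult (-1) y"] msubspace_msmult[of V y "-1"] by simp
qed

lemma msubspace_msmult_cancel:
  assumes "msubspace V" "msmult c x \<in> V" "c \<noteq> 0"
  shows "x \<in> V"
proof -
  have "msmult (inverse c) (msmult c x) = x" using assms(3) by (simp add: vec_eq_iff)
  then show ?thesis using msubspace_msmult[OF assms(1,2), of "inverse c"] by simp
qed

lemma msubspace_msmult_nonzero: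
  assumes "msubspace V" "c \<noteq> 0 \<Longrightarrow> x \<in> V"
  shows "msmult c x \<in> V"
proof (cases "c = 0")
  case True
  then have "msmult c x = 0" by (simp add: vec_eq_iff)
  then show ?thesis using msubspace_0[OF assms(1)] by simp
qed (use assms msubspace_msmult in blast)

lemma msubspace_scalars: "msubspace (scalars :: 'a::field M4 set)"
proof -
  have "mat a + mat b = (mat (a + b) :: 'a M4)" "msmult c (mat a) = (mat (c * a) :: 'a M4)"
    for a b c
    by (simp_all add: vec_eq_iff mat_nth)
  moreover have "(0 :: 'a M4) \<in> range mat" by (metis mat_0 rangeI)
  ultimately show ?thesis
    unfolding msubspace_def scalars_def by auto
qed

lemma msubspace_symm: "msubspace (symm :: 'a::field M4 set)"
  by (simp add: msubspace_def symm_def transpose_add transpose_msmult transpose_zero)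

lemma msubspace_skew: "msubspace (skew :: 'a::field M4 set)"
proof -
  have "msmult c (- A) = - msmult c A" for c and A :: "'a M4"
    by (simp add: vec_eq_iff)
  then show ?thesis
    by (simp add: msubspace_def skew_def transpose_add transpose_msmult transpose_zero)
qed

lemma msum_memI: "u \<in> U \<Longrightarrow> v \<in> V \<Longrightarrow> u + v \<in> msum U V"
  unfolding msum_def by blast

lemma msubspace_msum:
  assumes U: "msubspace U" and V: "msubspace V"
  shows "msubspace (msum U V)"
  unfolding msubspace_def msum_def
proof (intro conjI ballI allI)
  show "0 \<in> {u + v |u v. u \<in> U \<and> v \<in> V}"
    using msubspace_0[OF U] msubspace_0[OF V] by force
next
  fix x y
  assume "x \<in> {u + v |u v. u \<in> U \<and> v \<in> V}" "y \<in> {u + v |u v. u \<in> U \<and> v \<in> V}"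
  then obtain u v u' v' where "x = u + v" "y = u' + v'" "u \<in> U" "u' \<in> U" "v \<in> V" "v' \<in> V"
    by blast
  moreover have "u + v + (u' + v') = (u + u') + (v + v')" by (simp add: algebra_simps)
  ultimately show "x + y \<in> {u + v |u v. u \<in> U \<and> v \<in> V}"
    using msubspace_add[OF U] msubspace_add[OF V] by blast
next
  fix c x
  assume "x \<in> {u + v |u v. u \<in> U \<and> v \<in> V}"
  then obtain u v where "x = u + v" "u \<in> U" "v \<in> V" by blast
  moreover have "msmult c (u + v) = msmult c u + msmult c v" by (simp add: vec_eq_iff algebra_simps)
  ultimately show "msmult c x \<in> {u + v |u v. u \<in> U \<and> v \<in> V}"
    using msubspace_msmult[OF U] msubspace_msmult[OF V] by blast
qed

lemma msubspace_mspan: "msubspace (mspan S)"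
  unfolding mspan_def msubspace_def by auto

lemma mspan_superset: "S \<subseteq> mspan S"
  unfolding mspan_def by auto

lemma mspan_least: "msubspace V \<Longrightarrow> S \<subseteq> V \<Longrightarrow> mspan S \<subseteq> V"
  unfolding mspan_def by auto

lemma mspan_mono: "S \<subseteq> T \<Longrightarrow> mspan S \<subseteq> mspan T"
  unfolding mspan_def by auto

lemma msubspace_mbracket: "msubspace (mbracket U V)"
  by (simp add: mbracket_def msubspace_mspan)

lemma comm_in_mbracket: "u \<in> U \<Longrightarrow> v \<in> V \<Longrightarrow> comm u v \<in> mbracket U V"
  unfolding mbracket_def by (rule subsetD[OF mspan_superset]) blast

lemma mbracket_least:
  "msubspace W \<Longrightarrow> (\<And>u v. u \<in> U \<Longrightarrow> v \<in> V \<Longrightarrow> comm u v \<in> W) \<Longrightarrow> mbracket U V \<subseteq> W"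
  unfolding mbracket_def by (rule mspan_least) blast+

lemma mbracket_mono: "U \<subseteq> U' \<Longrightarrow> V \<subseteq> V' \<Longrightarrow> mbracket U V \<subseteq> mbracket U' V'"
  unfolding mbracket_def by (rule mspan_mono) blast

lemma sym_unit_in_mbracket_symm_skew:
  assumes "i \<noteq> j"
  shows "sym_unit i j \<in> mbracket symm (skew :: 'a::field M4 set)"
  using comm_in_mbracket[OF unit_mat_diag_symm[of i] skew_unit_skew[of i j]] assms
  by (simp add: comm_unit_skew_unit)

lemma unit_mat_diff_in_mbracket_symm_skew:
  assumes "i \<noteq> j"
  shows "unit_mat j j - unit_mat i i \<in> mbracket symm (skew :: 'a::field_char_0 M4 set)"
proof -
  have "msmult 2 (unit_mat j j - unit_mat i i) \<in> mbracket symm (skew :: 'a M4 set)"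
    using comm_in_mbracket[OF sym_unit_symm[of i j] skew_unit_skew[of i j], where 'a='a]
      comm_sym_unit_skew_unit[OF assms, where 'a='a] by simp
  then show ?thesis by (rule msubspace_msmult_cancel[OF msubspace_mbracket]) simp
qed

text \<open>The sum of those of the summands Z, S_0, K of M_4 whose flag z, s, k is set; each
  omitted summand is cut out by one linear condition.\<close>
definition component_sum :: "bool \<Rightarrow> bool \<Rightarrow> bool \<Rightarrow> 'a::field M4 set" where
  "component_sum z s k = {x. (\<not> z \<longrightarrow> trace x = 0) \<and> (\<not> s \<longrightarrow> x + transpose x \<in> scalars)
     \<and> (\<not> k \<longrightarrow> x \<in> symm)}"

lemma plus_transpose_in_scalars_iff:
  fixes x :: "'a::field_char_0 M4"
  shows "x + transpose x \<in> scalars \<longleftrightarrow>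
    (\<forall>a b. a \<noteq> b \<longrightarrow> x $ a $ b + x $ b $ a = 0) \<and> (\<forall>a b. x $ a $ a = x $ b $ b)"
proof
  assume "x + transpose x \<in> scalars"
  then obtain c where c: "x + transpose x = mat c" by (auto simp: scalars_def)
  have "(x + transpose x) $ a $ b = mat c $ a $ b" for a b using c by simp
  then have "a \<noteq> b \<Longrightarrow> x $ a $ b + x $ b $ a = 0" "x $ a $ a + x $ a $ a = c" for a b
    by (simp_all add: mat_nth)
  then show "(\<forall>a b. a \<noteq> b \<longrightarrow> x $ a $ b + x $ b $ a = 0) \<and> (\<forall>a b. x $ a $ a = x $ b $ b)"
    by (metis add_diff_cancel_left' diff_add_cancel mult_2 mult_cancel_left zero_neq_numeral)
next
  assume "(\<forall>a b. a \<noteq> b \<longrightarrow> x $ a $ b + x $ b $ a = 0) \<and> (\<forall>a b. x $ a $ a = x $ b $ b)"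
  then have "x + transpose x = mat (x $ 1 $ 1 + x $ 1 $ 1)"
    by (auto simp: vec_eq_iff mat_nth)
  then show "x + transpose x \<in> scalars" by (simp add: scalars_def)
qed

lemma component_sum_msubspace: "msubspace (component_sum z s k :: 'a::field M4 set)"
  unfolding msubspace_def
proof (intro conjI ballI allI)
  have "(0 :: 'a M4) \<in> scalars" "(0 :: 'a M4) \<in> symm"
    by (simp_all add: msubspace_0 msubspace_scalars msubspace_symm)
  then show "(0 :: 'a M4) \<in> component_sum z s k"
    by (simp add: component_sum_def trace_def transpose_zero)
next
  fix x y :: "'a M4"
  assume "x \<in> component_sum z s k" "y \<in> component_sum z s k"
  moreover have "x + y + transpose (x + y) = (x + transpose x) + (y + transpose y)"
    by (simp add: transpose_add algebra_simps)
  ultimately show "x + y \<in> component_sum z s k"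
    using msubspace_add[OF msubspace_scalars] msubspace_add[OF msubspace_symm]
    unfolding component_sum_def mem_Collect_eq trace_add by (metis add.right_neutral)
next
  fix c and x :: "'a M4"
  assume "x \<in> component_sum z s k"
  moreover have "msmult c x + transpose (msmult c x) = msmult c (x + transpose x)"
    by (simp add: vec_eq_iff algebra_simps)
  ultimately show "msmult c x \<in> component_sum z s k"
    using msubspace_msmult[OF msubspace_scalars] msubspace_msmult[OF msubspace_symm]
    unfolding component_sum_def mem_Collect_eq trace_msmult by (metis mult_zero_right)
qed

lemma component_sum_mono:
  "(z \<Longrightarrow> z') \<Longrightarrow> (s \<Longrightarrow> s') \<Longrightarrow> (k \<Longrightarrow> k') \<Longrightarrow> component_sum z s k \<subseteq> component_sum z' s' k'"
  by (auto simp: component_sum_def)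

lemma component_sum_subset:
  fixes V :: "'a::field_char_0 M4 set"
  assumes V: "msubspace V"
    and scalar: "z \<Longrightarrow> mat 1 \<in> V"
    and sym: "\<And>i j. s \<Longrightarrow> i \<noteq> j \<Longrightarrow> sym_unit i j \<in> V"
    and diag: "\<And>i j. s \<Longrightarrow> i \<noteq> j \<Longrightarrow> unit_mat j j - unit_mat i i \<in> V"
    and skew: "\<And>i j. k \<Longrightarrow> i \<noteq> j \<Longrightarrow> skew_unit i j \<in> V"
  shows "component_sum z s k \<subseteq> V"
proof
  fix x :: "'a M4"
  assume "x \<in> component_sum z s k"
  then have tr: "\<not> z \<Longrightarrow> trace x = 0"
    and offdiag: "\<And>a b. \<not> s \<Longrightarrow> a \<noteq> b \<Longrightarrow> x $ a $ b + x $ b $ a = 0"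
    and diag_const: "\<And>a b. \<not> s \<Longrightarrow> x $ a $ a = x $ b $ b"
    and sym_x: "\<And>a b. \<not> k \<Longrightarrow> x $ a $ b = x $ b $ a"
    by (auto simp: component_sum_def plus_transpose_in_scalars_iff symm_iff)
  define c where "c = trace x / 4"
  have "x = msmult c (mat 1)
    + msmult ((x$1$2 + x$2$1)/2) (sym_unit 1 2) + msmult ((x$1$3 + x$3$1)/2) (sym_unit 1 3)
    + msmult ((x$1$4 + x$4$1)/2) (sym_unit 1 4) + msmult ((x$2$3 + x$3$2)/2) (sym_unit 2 3)
    + msmult ((x$2$4 + x$4$2)/2) (sym_unit 2 4) + msmult ((x$3$4 + x$4$3)/2) (sym_unit 3 4)
    + msmult (x$2$2 - c) (unit_mat 2 2 - unit_mat 1 1)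
    + msmult (x$3$3 - c) (unit_mat 3 3 - unit_mat 1 1)
    + msmult (x$4$4 - c) (unit_mat 4 4 - unit_mat 1 1)
    + msmult ((x$1$2 - x$2$1)/2) (skew_unit 1 2) + msmult ((x$1$3 - x$3$1)/2) (skew_unit 1 3)
    + msmult ((x$1$4 - x$4$1)/2) (skew_unit 1 4) + msmult ((x$2$3 - x$3$2)/2) (skew_unit 2 3)
    + msmult ((x$2$4 - x$4$2)/2) (skew_unit 2 4) + msmult ((x$3$4 - x$4$3)/2) (skew_unit 3 4)"
    (is "x = ?decomposition")
    unfolding vec_eq_iff forall_4
    by (simp add: sym_unit_def skew_unit_def mat_nth c_def trace_def sum_4 field_simps)
  moreover have "?decomposition \<in> V"
  proof -
    have "c \<noteq> 0 \<Longrightarrow> mat 1 \<in> V"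
      using tr scalar by (auto simp: c_def)
    moreover have "a \<noteq> b \<Longrightarrow> (x$a$b + x$b$a)/2 \<noteq> 0 \<Longrightarrow> sym_unit a b \<in> V" for a b
      using offdiag sym by auto
    moreover have "a \<noteq> 1 \<Longrightarrow> x$a$a - c \<noteq> 0 \<Longrightarrow> unit_mat a a - unit_mat 1 1 \<in> V" for a
    proof (cases s)
      case False
      then have "trace x = 4 * x$a$a"
        using diag_const[of 1 a] diag_const[of 2 a] diag_const[of 3 a] diag_const[of 4 a]
        by (simp add: trace_def sum_4)
      then show "x$a$a - c \<noteq> 0 \<Longrightarrow> ?thesis" by (simp add: c_def)
    qed (use diag in auto)
    moreover have "a \<noteq> b \<Longrightarrow> (x$a$b - x$b$a)/2 \<noteq> 0 \<Longrightarrow> skew_unit a b \<in> V" for a b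
      using sym_x skew by auto
    ultimately show ?thesis
      by (intro msubspace_add[OF V] msubspace_msmult_nonzero[OF V]) simp_all
  qed
  ultimately show "x \<in> V" by simp
qed

lemma component_sum_none: "component_sum False False False = {0 :: 'a::field_char_0 M4}"
proof
  have "msubspace {0 :: 'a M4}" by (simp add: msubspace_def vec_eq_iff)
  then show "component_sum False False False \<subseteq> {0 :: 'a M4}"
    by (rule component_sum_subset) simp_all
qed (simp add: msubspace_0 component_sum_msubspace)

lemma component_sum_scalars: "component_sum True False False = (scalars :: 'a::field_char_0 M4 set)"
proof
  show "component_sum True False False \<subseteq> (scalars :: 'a M4 set)"
    by (rule component_sum_subset[OF msubspace_scalars]) (simp_all add: scalars_def)
  have "mat c + transpose (mat c) = (mat (c + c) :: 'a M4)" for c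
    by (simp add: vec_eq_iff mat_nth)
  then show "scalars \<subseteq> (component_sum True False False :: 'a M4 set)"
    by (auto simp: component_sum_def scalars_def mat_symm)
qed

lemma component_sum_skew: "component_sum False False True = (skew :: 'a::field_char_0 M4 set)"
proof
  show "component_sum False False True \<subseteq> (skew :: 'a M4 set)"
    by (rule component_sum_subset[OF msubspace_skew]) (simp_all add: skew_unit_skew)
  show "skew \<subseteq> (component_sum False False True :: 'a M4 set)"
  proof
    fix x :: "'a M4"
    assume x: "x \<in> skew"
    then have "x + transpose x \<in> scalars"
      by (simp add: skew_def msubspace_0 msubspace_scalars)
    moreover have "trace x = 0" using skew_diag_zero[OF x] by (simp add: trace_def)
    ultimately show "x \<in> component_sum False False True"
      by (simp add: component_sum_def)
  qed
qed

lemma component_sum_mbracket_symm_skew: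
  "component_sum False True False = mbracket symm (skew :: 'a::field_char_0 M4 set)"
proof
  show "component_sum False True False \<subseteq> mbracket symm (skew :: 'a M4 set)"
    by (rule component_sum_subset[OF msubspace_mbracket])
      (simp_all add: sym_unit_in_mbracket_symm_skew unit_mat_diff_in_mbracket_symm_skew)
  show "mbracket symm skew \<subseteq> (component_sum False True False :: 'a M4 set)"
    by (rule mbracket_least[OF component_sum_msubspace])
      (simp add: component_sum_def trace_comm comm_symm_skew_symm)
qed

lemma component_sum_symm: "component_sum True True False = (symm :: 'a::field_char_0 M4 set)"
proof
  show "component_sum True True False \<subseteq> (symm :: 'a M4 set)"
    by (rule component_sum_subset[OF msubspace_symm])
      (simp_all add: mat_symm sym_unit_symm unit_mat_diff_symm)
qed (simp add: component_sum_def subsetI)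

lemma component_sum_scalars_skew:
  "component_sum True False True = msum scalars (skew :: 'a::field_char_0 M4 set)"
proof
  have "mat 1 \<in> msum scalars (skew :: 'a M4 set)"
    using msum_memI[of "mat 1" scalars 0 skew] by (simp add: scalars_def msubspace_0 msubspace_skew)
  moreover have "skew_unit i j \<in> msum scalars (skew :: 'a M4 set)" for i j
    using msum_memI[of 0 scalars "skew_unit i j" skew]
    by (simp add: skew_unit_skew msubspace_0 msubspace_scalars)
  ultimately show "component_sum True False True \<subseteq> msum scalars (skew :: 'a M4 set)"
    by (intro component_sum_subset msubspace_msum msubspace_scalars msubspace_skew) simp_all
  have "scalars \<subseteq> (component_sum True False True :: 'a M4 set)"
    "skew \<subseteq> (component_sum True False True :: 'a M4 set)"
    by (simp_all add: component_sum_mono flip: component_sum_scalars component_sum_skew)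
  then show "msum scalars skew \<subseteq> (component_sum True False True :: 'a M4 set)"
    unfolding msum_def using msubspace_add[OF component_sum_msubspace] by blast
qed

lemma component_sum_mbracket_UNIV:
  "component_sum False True True = mbracket UNIV (UNIV :: 'a::field_char_0 M4 set)"
proof
  have "mbracket symm skew \<subseteq> mbracket UNIV (UNIV :: 'a M4 set)"
    by (rule mbracket_mono) simp_all
  moreover have "skew_unit i j \<in> mbracket UNIV (UNIV :: 'a M4 set)" if "i \<noteq> j" for i j
    using comm_in_mbracket[of "unit_mat i i" UNIV "sym_unit i j" UNIV] that
    by (simp add: comm_unit_sym_unit)
  ultimately show "component_sum False True True \<subseteq> mbracket UNIV (UNIV :: 'a M4 set)"
    by (intro component_sum_subset msubspace_mbracket)
      (auto simp: sym_unit_in_mbracket_symm_skew unit_mat_diff_in_mbracket_symm_skew)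
  show "mbracket UNIV UNIV \<subseteq> (component_sum False True True :: 'a M4 set)"
    by (rule mbracket_least[OF component_sum_msubspace]) (simp add: component_sum_def trace_comm)
qed

lemma component_sum_all: "component_sum True True True = UNIV"
  by (simp add: component_sum_def)

definition signed_perm_mat :: "(4 \<Rightarrow> 4) \<Rightarrow> (4 \<Rightarrow> 'a) \<Rightarrow> 'a::field M4" where
  "signed_perm_mat t d = (\<chi> a b. if b = t a then d a else 0)"

lemma signed_perm_mat_conj_nth:
  "(signed_perm_mat t d ** x ** transpose (signed_perm_mat t d)) $ a $ b
    = d a * d b * x $ t a $ t b"
proof -
  have "(if P then u else 0) * v = (if P then u * v else 0)"
    "v * (if P then u else 0) = (if P then v * u else 0)" for P and u v :: 'a
    by simp_all
  then show ?thesis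
    by (simp add: signed_perm_mat_def matrix_matrix_mult_def algebra_simps)
qed

lemma signed_perm_mat_orth4:
  assumes "inj t" "\<And>a. d a * d a = 1"
  shows "signed_perm_mat t d \<in> orth4"
proof -
  have "(signed_perm_mat t d ** transpose (signed_perm_mat t d)) $ a $ b = mat 1 $ a $ b" for a b
    using signed_perm_mat_conj_nth[of t d "mat 1" a b] assms by (simp add: mat_nth inj_eq)
  then show ?thesis by (simp add: orth4_def vec_eq_iff)
qed

lemma exists_inj_map_pair:
  fixes i j i' j' :: 'a
  assumes "i \<noteq> j" "i' \<noteq> j'"
  shows "\<exists>t. inj t \<and> t i = i' \<and> t j = j'"
proof -
  define s where "s = Transposition.transpose i i'"
  have "s j \<noteq> i'"
    using assms(1) by (metis s_def transpose_apply_first transpose_eq_imp_eq)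
  then have "inj (Transposition.transpose (s j) j' \<circ> s)
    \<and> (Transposition.transpose (s j) j' \<circ> s) i = i' \<and> (Transposition.transpose (s j) j' \<circ> s) j = j'"
    using assms(2) by (simp add: s_def inj_compose inj_transpose transpose_apply_other)
  then show ?thesis by blast
qed

text \<open>The two eigen-components of x under conjugation by the reflection diag(1,..,-1,..,1)
  flipping coordinate k.\<close>
definition reflection_even :: "4 \<Rightarrow> 'a::field M4 \<Rightarrow> 'a M4" where
  "reflection_even k x = (\<chi> a b. if (a = k) = (b = k) then x $ a $ b else 0)"

definition reflection_odd :: "4 \<Rightarrow> 'a::field M4 \<Rightarrow> 'a M4" where
  "reflection_odd k x = (\<chi> a b. if (a = k) = (b = k) then 0 else x $ a $ b)"

lemma diag_part_eq_reflection_even: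
  "diag_part x = reflection_even 1 (reflection_even 2 (reflection_even 3 (reflection_even 4 x)))"
  unfolding vec_eq_iff forall_4 by (simp add: diag_part_def reflection_even_def)

lemma reflection_odd_pair:
  assumes "i \<noteq> j"
  shows "reflection_odd i (reflection_odd j x)
    = msmult (x $ i $ j) (unit_mat i j) + msmult (x $ j $ i) (unit_mat j i)"
  using assms by (auto simp: vec_eq_iff reflection_odd_def)

locale orth4_invariant_lie_skew_ideal =
  fixes L :: "'a::field_char_0 M4 set"
  assumes lie_skew_ideal: "lie_skew_ideal L"
    and orth4_invariant: "\<forall>P\<in>orth4. \<forall>x\<in>L. P ** x ** transpose P \<in> L"
begin

lemma L_msubspace: "msubspace L"
  using lie_skew_ideal by (simp add: lie_skew_ideal_def)

lemma comm_skew_mem: "x \<in> L \<Longrightarrow> a \<in> skew \<Longrightarrow> comm x a \<in> L"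
  using lie_skew_ideal by (simp add: lie_skew_ideal_def)

lemma signed_perm_conj_mem:
  assumes "x \<in> L" "inj t" "\<And>a. d a * d a = 1"
  shows "(\<chi> a b. d a * d b * x $ t a $ t b) \<in> L"
proof -
  have "signed_perm_mat t d ** x ** transpose (signed_perm_mat t d) \<in> L"
    using orth4_invariant signed_perm_mat_orth4[of t d, OF assms(2,3)] assms(1) by blast
  moreover have "signed_perm_mat t d ** x ** transpose (signed_perm_mat t d)
      = (\<chi> a b. d a * d b * x $ t a $ t b)"
    by (simp add: vec_eq_iff signed_perm_mat_conj_nth)
  ultimately show ?thesis by simp
qed

lemma perm_conj_mem: "x \<in> L \<Longrightarrow> inj t \<Longrightarrow> (\<chi> a b. x $ t a $ t b) \<in> L"
  using signed_perm_conj_mem[of x t "\<lambda>_. 1"] by simp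

lemma reflection_parts_mem:
  assumes "x \<in> L"
  shows "reflection_even k x \<in> L" "reflection_odd k x \<in> L"
proof -
  define r :: "4 \<Rightarrow> 'a" where "r a = (if a = k then -1 else 1)" for a
  define y where "y = (\<chi> a b. r a * r b * x $ id a $ id b)"
  have y: "y \<in> L"
    unfolding y_def by (rule signed_perm_conj_mem[OF assms]) (simp_all add: r_def)
  have "reflection_even k x = msmult (1/2) (x + y)" "reflection_odd k x = msmult (1/2) (x - y)"
    by (auto simp: vec_eq_iff reflection_even_def reflection_odd_def y_def r_def)
  then show "reflection_even k x \<in> L" "reflection_odd k x \<in> L"
    using y assms msubspace_add[OF L_msubspace] msubspace_diff[OF L_msubspace]
      msubspace_msmult[OF L_msubspace] by simp_all
qed

lemma diag_part_mem: "x \<in> L \<Longrightarrow> diag_part x \<in> L"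
  unfolding diag_part_eq_reflection_even by (intro reflection_parts_mem)

lemma pair_part_mem:
  "i \<noteq> j \<Longrightarrow> x \<in> L \<Longrightarrow> msmult (x $ i $ j) (unit_mat i j) + msmult (x $ j $ i) (unit_mat j i) \<in> L"
  by (metis reflection_odd_pair reflection_parts_mem(2))

lemma sym_unit_mem_transfer:
  assumes "i \<noteq> j" "i' \<noteq> j'" "sym_unit i j \<in> L"
  shows "sym_unit i' j' \<in> L"
proof -
  obtain t where t: "inj t" "t i' = i" "t j' = j" using exists_inj_map_pair[OF assms(2,1)] by blast
  have "(\<chi> a b. sym_unit i j $ t a $ t b) \<in> L" by (rule perm_conj_mem[OF assms(3) t(1)])
  moreover have "(\<chi> a b. sym_unit i j $ t a $ t b) = (sym_unit i' j' :: 'a M4)"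
    unfolding t(2,3)[symmetric] using t(1) by (auto simp: vec_eq_iff sym_unit_def inj_eq)
  ultimately show ?thesis by simp
qed

lemma skew_unit_mem_transfer:
  assumes "i \<noteq> j" "i' \<noteq> j'" "skew_unit i j \<in> L"
  shows "skew_unit i' j' \<in> L"
proof -
  obtain t where t: "inj t" "t i' = i" "t j' = j" using exists_inj_map_pair[OF assms(2,1)] by blast
  have "(\<chi> a b. skew_unit i j $ t a $ t b) \<in> L" by (rule perm_conj_mem[OF assms(3) t(1)])
  moreover have "(\<chi> a b. skew_unit i j $ t a $ t b) = (skew_unit i' j' :: 'a M4)"
    unfolding t(2,3)[symmetric] using t(1) by (auto simp: vec_eq_iff skew_unit_def inj_eq)
  ultimately show ?thesis by simp
qed

lemma unit_mat_diff_mem: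
  assumes "i \<noteq> j" "sym_unit i j \<in> L"
  shows "unit_mat j j - unit_mat i i \<in> L"
proof -
  have "msmult 2 (unit_mat j j - unit_mat i i) \<in> L"
    using comm_skew_mem[OF assms(2) skew_unit_skew[of i j]]
      comm_sym_unit_skew_unit[OF assms(1), where 'a='a] by simp
  then show ?thesis by (rule msubspace_msmult_cancel[OF L_msubspace]) simp
qed

lemma sym_unit_mem_of_pair:
  assumes "i \<noteq> j" "msmult a (unit_mat i j) + msmult b (unit_mat j i) \<in> L" "a + b \<noteq> 0"
  shows "sym_unit i j \<in> L"
proof -
  have "msmult (a + b) (unit_mat j j - unit_mat i i) \<in> L"
    using comm_skew_mem[OF assms(2) skew_unit_skew[of i j]] comm_pair_skew_unit[OF assms(1), of a b]
    by simp
  then have "unit_mat j j - unit_mat i i \<in> L"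
    using msubspace_msmult_cancel[OF L_msubspace] assms(3) by blast
  then have "msmult (-2) (sym_unit i j) \<in> L"
    using comm_skew_mem[OF _ skew_unit_skew[of i j]]
      comm_unit_diff_skew_unit[OF assms(1), where 'a='a] by metis
  then show ?thesis by (rule msubspace_msmult_cancel[OF L_msubspace]) simp
qed

lemma skew_unit_mem_of_pair:
  assumes "i \<noteq> j" "msmult a (unit_mat i j) + msmult b (unit_mat j i) \<in> L" "a - b \<noteq> 0"
  shows "skew_unit i j \<in> L"
proof -
  let ?p = "msmult a (unit_mat i j) + msmult b (unit_mat j i)"
  have "msmult ((a + b) / 2) (sym_unit i j) \<in> L"
    using sym_unit_mem_of_pair[OF assms(1,2)] by (intro msubspace_msmult_nonzero[OF L_msubspace]) simp
  then have "?p - msmult ((a + b) / 2) (sym_unit i j) \<in> L"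
    using msubspace_diff[OF L_msubspace assms(2)] by blast
  moreover have "?p - msmult ((a + b) / 2) (sym_unit i j) = msmult ((a - b) / 2) (skew_unit i j)"
    using assms(1) by (auto simp: vec_eq_iff sym_unit_def skew_unit_def field_simps)
  ultimately show ?thesis
    using msubspace_msmult_cancel[OF L_msubspace] assms(3) by simp
qed

lemma component_sum_subset_self:
  "component_sum (mat 1 \<in> L) (sym_unit 1 2 \<in> L) (skew_unit 1 2 \<in> L) \<subseteq> L"
proof -
  have sym: "sym_unit i j \<in> L" if "sym_unit 1 2 \<in> L" "i \<noteq> j" for i j :: 4
    using sym_unit_mem_transfer[of 1 2 i j] that by simp
  have skew: "skew_unit i j \<in> L" if "skew_unit 1 2 \<in> L" "i \<noteq> j" for i j :: 4
    using skew_unit_mem_transfer[of 1 2 i j] that by simp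
  show ?thesis
    by (rule component_sum_subset[OF L_msubspace]) (simp_all add: sym skew unit_mat_diff_mem)
qed

lemma diag_const_if_sym_unit_notin:
  assumes "x \<in> L" "sym_unit 1 2 \<notin> L"
  shows "x $ a $ a = x $ b $ b"
proof (rule ccontr)
  assume ne: "x $ a $ a \<noteq> x $ b $ b"
  then have "a \<noteq> b" by blast
  have "msmult (x $ a $ a - x $ b $ b) (sym_unit a b) \<in> L"
    using comm_skew_mem[OF diag_part_mem[OF assms(1)] skew_unit_skew[of a b]]
      comm_diag_part_skew_unit[OF \<open>a \<noteq> b\<close>, of x] by simp
  then have "sym_unit a b \<in> L" using msubspace_msmult_cancel[OF L_msubspace] ne by simp
  then show False using sym_unit_mem_transfer[OF \<open>a \<noteq> b\<close>, of 1 2] assms(2) by simp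
qed

lemma symmetric_if_skew_unit_notin:
  assumes "x \<in> L" "skew_unit 1 2 \<notin> L"
  shows "x $ a $ b = x $ b $ a"
proof (rule ccontr)
  assume ne: "x $ a $ b \<noteq> x $ b $ a"
  then have "a \<noteq> b" by blast
  have "skew_unit a b \<in> L"
    using skew_unit_mem_of_pair[OF \<open>a \<noteq> b\<close> pair_part_mem[OF \<open>a \<noteq> b\<close> assms(1)]] ne by simp
  then show False using skew_unit_mem_transfer[OF \<open>a \<noteq> b\<close>, of 1 2] assms(2) by simp
qed

lemma antisymmetric_offdiag_if_sym_unit_notin:
  assumes "x \<in> L" "sym_unit 1 2 \<notin> L" "a \<noteq> b"
  shows "x $ a $ b + x $ b $ a = 0"
proof (rule ccontr)
  assume "x $ a $ b + x $ b $ a \<noteq> 0"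
  then have "sym_unit a b \<in> L"
    using sym_unit_mem_of_pair[OF assms(3) pair_part_mem[OF assms(3,1)]] by simp
  then show False using sym_unit_mem_transfer[OF assms(3), of 1 2] assms(2) by simp
qed

lemma trace_zero_if_scalar_notin:
  assumes x: "x \<in> L" and "mat 1 \<notin> L"
  shows "trace x = 0"
proof (rule ccontr)
  assume "trace x \<noteq> 0"
  define c where "c = trace x / 4"
  define y where "y = diag_part x - msmult c (mat 1)"
  have "y \<in> component_sum False (sym_unit 1 2 \<in> L) False"
  proof -
    have "trace y = 0"
      unfolding y_def trace_sub trace_msmult trace_I by (simp add: c_def trace_def diag_part_def)
    moreover have "y \<in> symm" by (simp add: symm_iff y_def diag_part_def mat_nth)
    moreover have "y + transpose y \<in> scalars" if "sym_unit 1 2 \<notin> L"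
      unfolding plus_transpose_in_scalars_iff
      using diag_const_if_sym_unit_notin[OF x that] by (simp add: y_def diag_part_def mat_nth)
    ultimately show ?thesis by (simp add: component_sum_def)
  qed
  then have "y \<in> L"
    using component_sum_mono[of False "mat 1 \<in> L" _ _ False] component_sum_subset_self by blast
  then have "msmult c (mat 1) \<in> L"
    using msubspace_diff[OF L_msubspace diag_part_mem[OF x]] by (force simp: y_def)
  moreover have "c \<noteq> 0" using \<open>trace x \<noteq> 0\<close> by (simp add: c_def)
  ultimately show False using msubspace_msmult_cancel[OF L_msubspace] assms(2) by blast
qed

lemma subset_component_sum:
  "L \<subseteq> component_sum (mat 1 \<in> L) (sym_unit 1 2 \<in> L) (skew_unit 1 2 \<in> L)"
  by (auto simp: component_sum_def symm_iff plus_transpose_in_scalars_iff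
      symmetric_if_skew_unit_notin antisymmetric_offdiag_if_sym_unit_notin
      diag_const_if_sym_unit_notin trace_zero_if_scalar_notin)

lemma eq_component_sum:
  "L = component_sum (mat 1 \<in> L) (sym_unit 1 2 \<in> L) (skew_unit 1 2 \<in> L)"
  using component_sum_subset_self subset_component_sum by blast

end

theorem mainTheorem4:
  fixes L :: "'a::field_char_0 M4 set"
  assumes "lie_skew_ideal L"
    and "\<forall>P\<in>orth4. \<forall>x\<in>L. P ** x ** transpose P \<in> L"
  shows "L = {0} \<or> L = scalars \<or> L = skew \<or> L = mbracket symm skew \<or> L = symm
    \<or> L = msum scalars skew \<or> L = mbracket UNIV UNIV \<or> L = UNIV"
proof -
  interpret orth4_invariant_lie_skew_ideal L
    using assms by unfold_locales
  obtain z s k where "L = component_sum z s k"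
    using eq_component_sum by blast
  then show ?thesis
    by (cases z; cases s; cases k)
      (simp_all add: component_sum_none component_sum_scalars component_sum_skew
        component_sum_mbracket_symm_skew component_sum_symm component_sum_scalars_skew
        component_sum_mbracket_UNIV component_sum_all)
qed

end
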